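(* Let $B\subset\mathbb R^8$ be a bounded domain and let $(B^h)_{h>0}$, $B^h\subset\mathbb Z^8_h$, converge to $B$. Let $f\in C^1(B,\mathbb O)$ and suppose there are functions $f^h:B^h\to\mathbb O$ with $D^hf^h(x)=0$ for every $x\in(B^h)^\circ$ and $$\lim_{h\to0^+}\ \max_{x\in B^h\cap B}|f(x)-f^h(x)|=0.$$ Then $Df=0$ on $B$.
   Context: $\mathbb O$ is the real octonion algebra with basis $\mathbf e_0=1,\dots,\mathbf e_7$, identified with $\mathbb R^8$; $|\cdot|$ is the Euclidean norm. $Df=\sum_{l=0}^7\mathbf e_l\,\partial f/\partial x_l$. For $h>0$, $\mathbb Z^8_h=(h\mathbb Z)^8$, $e_0,\dots,e_7$ are the standard unit vectors, $D^hf(x)=\sum_{l=0}^7\mathbf e_l\frac{f(x+he_l)-f(x-he_l)}{2h}$. For $A\subset\mathbb Z^8_h$: $N(x)=\{x,x\pm he_0,\dots,x\pm he_7\}$, $\partial A=\{x\in\mathbb Z^8_h:\ N(x)\cap A\neq\emptyset,\ N(x)\cap(\mathbb Z^8_h\setminus A)\neq\emptyset\}$, $A^\circ=A\setminus\partial A$. A family $(B^h)_{h>0}$ with $B^h\subset\mathbb Z^8_h$ converges to a bounded domain $B\subset\mathbb R^8$ if, as $h\to0^+$, $\max_{\alpha\in\partial B}\min_{\beta\in\partial B^h}\|\alpha-\beta\|\to0$, $\max_{\alpha\in\partial B^h}\min_{\beta\in\partial B}\|\alpha-\beta\|\to0$, $\max_{\alpha\in\overline B}\min_{\beta\in B^h}\|\alpha-\beta\|\to0$,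 and $\max_{\alpha\in B^h}\min_{\beta\in\overline B}\|\alpha-\beta\|\to0$ (topological $\partial B,\overline B$ in $\mathbb R^8$; discrete $\partial B^h$). *)

theory Defs
  imports "HOL-Analysis.Analysis"
begin

text \<open>Octonions are modelled as real^8 (components indexed by the numeral type 8,
  i.e. 0..7). The basis vector e_l is oe l.\<close>

type_synonym oct = "real^8"

definition oe :: "nat \<Rightarrow> real^8" where
  "oe l = axis (of_nat l :: 8) 1"

text \<open>Fano-plane convention: e_i e_(i+1) = e_(i+3) (indices mod 7 in 1..7).\<close>
definition fano :: "(nat \<times> nat \<times> nat) set" where
  "fano = {(1,2,4),(2,3,5),(3,4,6),(4,5,7),(5,6,1),(6,7,2),(7,1,3)}"

definition fano_cyc :: "(nat \<times> nat \<times> nat) set" where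
  "fano_cyc = fano \<union> {(b,c,a) | a b c. (a,b,c) \<in> fano} \<union> {(c,a,b) | a b c. (a,b,c) \<in> fano}"

definition emul :: "nat \<Rightarrow> nat \<Rightarrow> real^8" where
  "emul i j =
     (if i = 0 then oe j
      else if j = 0 then oe i
      else if i = j then - oe 0
      else (\<Sum>k\<in>{1..7}. (if (i,j,k) \<in> fano_cyc then 1
                         else if (j,i,k) \<in> fano_cyc then -1 else 0) *\<^sub>R oe k))"

definition omult :: "real^8 \<Rightarrow> real^8 \<Rightarrow> real^8" where
  "omult x y = (\<Sum>i<8. \<Sum>j<8. (x $ (of_nat i) * y $ (of_nat j)) *\<^sub>R emul i j)"

definition octD :: "(real^8 \<Rightarrow> real^8) \<Rightarrow> real^8 \<Rightarrow> real^8" where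
  "octD f x = (\<Sum>l<8. omult (oe l) (frechet_derivative f (at x) (oe l)))"

definition lattice :: "real \<Rightarrow> (real^8) set" where
  "lattice h = {x. \<forall>i. \<exists>k::int. x $ i = h * of_int k}"

definition octDh :: "real \<Rightarrow> (real^8 \<Rightarrow> real^8) \<Rightarrow> real^8 \<Rightarrow> real^8" where
  "octDh h f x = (\<Sum>l<8. omult (oe l) ((1 / (2 * h)) *\<^sub>R (f (x + h *\<^sub>R oe l) - f (x - h *\<^sub>R oe l))))"

definition nbhd :: "real \<Rightarrow> real^8 \<Rightarrow> (real^8) set" where
  "nbhd h x = {x} \<union> (\<Union>l<8. {x + h *\<^sub>R oe l, x - h *\<^sub>R oe l})"

definition dbound :: "real \<Rightarrow> (real^8) set \<Rightarrow> (real^8) set" where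
  "dbound h A = {x \<in> lattice h. nbhd h x \<inter> A \<noteq> {} \<and> nbhd h x \<inter> (lattice h - A) \<noteq> {}}"

definition dinterior :: "real \<Rightarrow> (real^8) set \<Rightarrow> (real^8) set" where
  "dinterior h A = A - dbound h A"

definition maxmin_to0 :: "(real \<Rightarrow> (real^8) set) \<Rightarrow> (real \<Rightarrow> (real^8) set) \<Rightarrow> bool" where
  "maxmin_to0 S T \<longleftrightarrow>
     (\<forall>\<epsilon>>0. \<forall>\<^sub>F h in at_right 0. \<forall>a\<in>S h. \<exists>b\<in>T h. dist a b < \<epsilon>)"

definition disc_converges :: "(real \<Rightarrow> (real^8) set) \<Rightarrow> (real^8) set \<Rightarrow> bool" where
  "disc_converges Bh B \<longleftrightarrow>
     maxmin_to0 (\<lambda>h. frontier B) (\<lambda>h. dbound h (Bh h)) \<and>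
     maxmin_to0 (\<lambda>h. dbound h (Bh h)) (\<lambda>h. frontier B) \<and>
     maxmin_to0 (\<lambda>h. closure B) Bh \<and>
     maxmin_to0 Bh (\<lambda>h. closure B)"

end

theory Submission
  imports Defs
begin

text \<open>Sum \<open>D\<^sup>hf\<close> over a lattice cube of \<open>(2n+1)\<^sup>8\<close> points with
  \<open>(2n+1)h \<approx> r\<close> around \<open>x\<^sub>0\<close>. Once \<open>h\<close> is small, the cube lies in the discrete interior of
  \<open>B\<^sup>h\<close>, because the discrete boundary of \<open>B\<^sup>h\<close> stays close to the boundary of \<open>B\<close>. There
  \<open>D\<^sup>hf\<^sup>h = 0\<close>, so the sum equals the sum of \<open>D\<^sup>h(f - f\<^sup>h)\<close>; in each direction this
  telescopes to two faces of \<open>O(n\<^sup>7)\<close> points, giving a bound \<open>O(n\<^sup>7 \<epsilon> / h)\<close> when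
  \<open>|f - f\<^sup>h| \<le> \<epsilon>\<close>. On the other hand, by the mean value inequality each central
  difference is within \<open>\<eta>\<close> of the derivative at \<open>x\<^sub>0\<close> if \<open>f'\<close> varies by at most \<open>\<eta>\<close>
  on the ball, so the sum is \<open>(2n+1)\<^sup>8 Df(x\<^sub>0) + O(n\<^sup>8 \<eta>)\<close>. Comparing,
  \<open>|Df(x\<^sub>0)| \<le> C (\<eta> + \<epsilon> / r)\<close>; letting \<open>\<epsilon> \<rightarrow> 0\<close> and then \<open>\<eta> \<rightarrow> 0\<close> gives \<open>Df(x\<^sub>0) = 0\<close>.\<close>

lemma le_of_forall_pos_le_add_mult:
  fixes a b c :: real
  assumes "\<And>\<epsilon>. \<epsilon> > 0 \<Longrightarrow> a \<le> b + c * \<epsilon>"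
  shows "a \<le> b"
proof (rule field_le_epsilon)
  fix e :: real
  assume "e > 0"
  then have "a \<le> b + c * (e / (\<bar>c\<bar> + 1))"
    by (intro assms) (simp add: add_pos_nonneg)
  also have "c * (e / (\<bar>c\<bar> + 1)) \<le> (\<bar>c\<bar> + 1) * (e / (\<bar>c\<bar> + 1))"
    using \<open>e > 0\<close> by (intro mult_right_mono) auto
  also have "\<dots> = e"
    by (simp add: add_nonneg_eq_0_iff)
  finally show "a \<le> b + e"
    by simp
qed

lemma continuous_on_obtain_ball:
  fixes g :: "'a::metric_space \<Rightarrow> 'b::metric_space"
  assumes "continuous_on B g" "open B" "x0 \<in> B" "\<eta> > 0"
  obtains r where "r > 0" "ball x0 r \<subseteq> B" "\<And>y. y \<in> ball x0 r \<Longrightarrow> dist (g y) (g x0) < \<eta>"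
proof -
  obtain d where "d > 0" and d: "\<And>y. y \<in> B \<Longrightarrow> dist y x0 < d \<Longrightarrow> dist (g y) (g x0) < \<eta>"
    using assms(1,3,4) unfolding continuous_on_iff by metis
  obtain r where "r > 0" "ball x0 r \<subseteq> B"
    using assms(2,3) open_contains_ball by blast
  moreover have "dist (g y) (g x0) < \<eta>" if "y \<in> ball x0 (min r d)" for y
  proof -
    have "y \<in> B" "dist y x0 < d"
      using that \<open>ball x0 r \<subseteq> B\<close> by (auto simp: dist_commute)
    then show ?thesis
      by (rule d)
  qed
  ultimately show thesis
    using \<open>d > 0\<close> by (intro that[of "min r d"]) auto
qed

lemma norm_sum_diff_le:
  fixes G :: "'a \<Rightarrow> 'b::real_normed_vector"
  assumes "finite A" "finite C" "\<And>k. k \<in> A \<union> C \<Longrightarrow> norm (G k) \<le> e"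
  shows "norm (sum G A - sum G C) \<le> e * card (A - C) + e * card (C - A)"
proof -
  have "sum G A - sum G C = sum G (A - C) - sum G (C - A)"
    using assms(1,2) sum.Int_Diff[of A G C] sum.Int_Diff[of C G A] by (simp add: Int_commute)
  also have "norm \<dots> \<le> norm (sum G (A - C)) + norm (sum G (C - A))"
    by (rule norm_triangle_ineq4)
  also have "\<dots> \<le> e * card (A - C) + e * card (C - A)"
    using sum_norm_le[of "A - C" G "\<lambda>_. e"] sum_norm_le[of "C - A" G "\<lambda>_. e"] assms
    by (intro add_mono) (auto simp: mult.commute)
  finally show ?thesis .
qed

lemma norm_central_difference_sub_le:
  fixes f :: "'a::real_normed_vector \<Rightarrow> 'b::real_normed_vector"
    and f' :: "'a \<Rightarrow> 'a \<Rightarrow>\<^sub>L 'b"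
  assumes der: "\<And>y. y \<in> ball x0 r \<Longrightarrow> (f has_derivative f' y) (at y)"
    and close: "\<And>y. y \<in> ball x0 r \<Longrightarrow> norm (f' y - f' x0) \<le> \<eta>"
    and ball: "x + h *\<^sub>R e \<in> ball x0 r" "x - h *\<^sub>R e \<in> ball x0 r"
    and h: "h > 0"
  shows "norm ((1 / (2 * h)) *\<^sub>R (f (x + h *\<^sub>R e) - f (x - h *\<^sub>R e)) - f' x0 e) \<le> \<eta> * norm e"
proof -
  have step: "(x + h *\<^sub>R e) - (x - h *\<^sub>R e) = (2 * h) *\<^sub>R e"
    by (simp add: algebra_simps flip: scaleR_add_left)
  have "norm (f (x + h *\<^sub>R e) - f (x - h *\<^sub>R e) - f' x0 ((x + h *\<^sub>R e) - (x - h *\<^sub>R e)))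
      \<le> norm ((x + h *\<^sub>R e) - (x - h *\<^sub>R e)) * \<eta>"
  proof (rule differentiable_bound_linearization[where S = "ball x0 r"])
    show "(x - h *\<^sub>R e) + t *\<^sub>R ((x + h *\<^sub>R e) - (x - h *\<^sub>R e)) \<in> ball x0 r" if "t \<in> {0..1}" for t
    proof -
      have "(x - h *\<^sub>R e) + t *\<^sub>R ((x + h *\<^sub>R e) - (x - h *\<^sub>R e))
          = (1 - t) *\<^sub>R (x - h *\<^sub>R e) + t *\<^sub>R (x + h *\<^sub>R e)"
        by (simp add: algebra_simps)
      then show ?thesis
        using that ball convex_ball[of x0 r, unfolded convex_alt] by auto
    qed
    show "(f has_derivative f' y) (at y within ball x0 r)" if "y \<in> ball x0 r" for y
      using der[OF that] by (rule has_derivative_at_withinI)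
    show "onorm (blinfun_apply (f' y) - blinfun_apply (f' x0)) \<le> \<eta>" if "y \<in> ball x0 r" for y
      using close[OF that] by (simp add: norm_blinfun.rep_eq minus_blinfun.rep_eq fun_diff_def)
    show "x0 \<in> ball x0 r"
      using ball by (auto intro: le_less_trans[OF zero_le_dist])
  qed
  then have "norm (f (x + h *\<^sub>R e) - f (x - h *\<^sub>R e) - (2 * h) *\<^sub>R f' x0 e) \<le> 2 * h * norm e * \<eta>"
    unfolding step using h by (simp add: blinfun.scaleR_right)
  moreover have "(1 / (2 * h)) *\<^sub>R (f (x + h *\<^sub>R e) - f (x - h *\<^sub>R e)) - f' x0 e
      = (1 / (2 * h)) *\<^sub>R (f (x + h *\<^sub>R e) - f (x - h *\<^sub>R e) - (2 * h) *\<^sub>R f' x0 e)"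
    using h by (simp add: algebra_simps)
  ultimately show ?thesis
    using h by (simp add: divide_simps mult.commute)
qed

section \<open>Integer cubes and slabs\<close>

definition cube :: "nat \<Rightarrow> ('i::finite \<Rightarrow> int) set" where
  "cube n = PiE UNIV (\<lambda>_. {- int n..int n})"

lemma mem_cube: "k \<in> cube n \<longleftrightarrow> (\<forall>j. \<bar>k j\<bar> \<le> int n)"
  by (auto simp: cube_def PiE_iff abs_le_iff) (meson minus_le_iff)+

lemma finite_cube [simp]: "finite (cube n)"
  by (simp add: cube_def finite_PiE)

lemma card_cube: "card (cube n :: ('i::finite \<Rightarrow> int) set) = (2 * n + 1) ^ CARD('i)"
  by (simp add: cube_def card_PiE nat_add_distrib nat_mult_distrib)

lemma cube_update:
  assumes "k \<in> cube n" "\<bar>s\<bar> \<le> 1"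
  shows "k(i := k i + s) \<in> cube (Suc n)"
  using assms by (auto simp: mem_cube abs_le_iff) (smt (verit))+

lemma cube_subset_Suc: "cube n \<subseteq> cube (Suc n)"
  using cube_update[of _ n 0] by auto

definition slab :: "'i::finite \<Rightarrow> int set \<Rightarrow> nat \<Rightarrow> ('i \<Rightarrow> int) set" where
  "slab i I n = PiE UNIV (\<lambda>j. if j = i then I else {- int n..int n})"

lemma mem_slab: "k \<in> slab i I n \<longleftrightarrow> k i \<in> I \<and> (\<forall>j. j \<noteq> i \<longrightarrow> k j \<in> {- int n..int n})"
  by (auto simp: slab_def PiE_iff)

lemma finite_slab: "finite I \<Longrightarrow> finite (slab i I n)"
  by (simp add: slab_def finite_PiE)

lemma card_slab:
  fixes i :: "'i::finite"
  assumes "card I = 2"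
  shows "card (slab i I n) = 2 * (2 * n + 1) ^ (CARD('i) - 1)"
proof -
  have "card (slab i I n) = (\<Prod>j\<in>UNIV. if j = i then 2 else 2 * n + 1)"
    using assms
    by (simp add: slab_def card_PiE nat_add_distrib nat_mult_distrib if_distrib cong: if_cong)
  also have "\<dots> = 2 * (\<Prod>j\<in>UNIV - {i}. 2 * n + 1)"
    by (subst prod.remove[of _ i]) (auto intro!: prod.cong)
  finally show ?thesis
    by (simp add: card_Diff_singleton)
qed

lemma slab_diff_subset: "slab i I n - slab i J n \<subseteq> slab i (I - J) n"
  by (auto simp: mem_slab)

lemma sum_cube_shift:
  "(\<Sum>k\<in>cube n. G (k(i := k i + s))) = sum G (slab i {- int n + s..int n + s} n)"
  by (rule sum.reindex_bij_witness[where i="\<lambda>k. k(i := k i - s)" and j="\<lambda>k. k(i := k i + s)"])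
    (auto simp: mem_slab cube_def PiE_iff dest: spec[of _ i])

text \<open>The cubes shifted by \<open>+1\<close> and by \<open>-1\<close> in direction \<open>i\<close> differ only in two slabs of
  thickness two at opposite faces, so the difference of the sums is a boundary term.\<close>
lemma norm_sum_cube_shift_diff_le:
  fixes G :: "('i::finite \<Rightarrow> int) \<Rightarrow> 'b::real_normed_vector"
  assumes bound: "\<And>k. k \<in> cube (Suc n) \<Longrightarrow> norm (G k) \<le> e"
  shows "norm ((\<Sum>k\<in>cube n. G (k(i := k i + 1))) - (\<Sum>k\<in>cube n. G (k(i := k i - 1))))
    \<le> 4 * (2 * n + 1) ^ (CARD('i) - 1) * e"
proof -
  define A where "A = slab i {- int n + 1..int n + 1} n"
  define C where "C = slab i {- int n - 1..int n - 1} n"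
  have e_nonneg: "0 \<le> e"
    using bound[of "\<lambda>_. 0"] by (auto simp: mem_cube intro: order_trans[OF norm_ge_zero])
  have "\<bar>k j\<bar> \<le> int (Suc n)" if "k \<in> A \<union> C" for k j
    using that by (cases "j = i") (auto simp: A_def C_def mem_slab)
  then have norm_le: "norm (sum G A - sum G C) \<le> e * real (card (A - C) + card (C - A))"
    using norm_sum_diff_le[of A C G e] bound
    by (auto simp: A_def C_def finite_slab mem_cube algebra_simps)
  have "card (A - C) \<le> card (slab i {int n, int n + 1} n)"
    using slab_diff_subset[of i "{- int n + 1..int n + 1}" n "{- int n - 1..int n - 1}"]
    by (intro card_mono finite_slab) (auto simp: A_def C_def mem_slab)
  moreover have "card (C - A) \<le> card (slab i {- int n - 1, - int n} n)"
    using slab_diff_subset[of i "{- int n - 1..int n - 1}" n "{- int n + 1..int n + 1}"]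
    by (intro card_mono finite_slab) (auto simp: A_def C_def mem_slab)
  ultimately have "card (A - C) + card (C - A) \<le> 4 * (2 * n + 1) ^ (CARD('i) - 1)"
    using card_slab[of "{int n, int n + 1}" i n] card_slab[of "{- int n - 1, - int n}" i n] by simp
  then have "norm (sum G A - sum G C) \<le> e * real (4 * (2 * n + 1) ^ (CARD('i) - 1))"
    using norm_le e_nonneg by (meson mult_left_mono of_nat_mono order_trans)
  moreover have "(\<Sum>k\<in>cube n. G (k(i := k i + 1))) = sum G A"
    using sum_cube_shift[of G i 1 n] by (simp add: A_def)
  moreover have "(\<Sum>k\<in>cube n. G (k(i := k i - 1))) = sum G C"
    using sum_cube_shift[of G i "-1" n] by (simp add: C_def)
  ultimately show ?thesis
    by (simp add: algebra_simps)
qed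

section \<open>The discrete Dirac operator on lattice cubes\<close>

definition grid_point :: "real^8 \<Rightarrow> real \<Rightarrow> (8 \<Rightarrow> int) \<Rightarrow> real^8" where
  "grid_point b h k = b + h *\<^sub>R (\<chi> j. of_int (k j))"

lemma grid_point_update:
  "grid_point b h (k(i := k i + s)) = grid_point b h k + (h * of_int s) *\<^sub>R axis i 1"
  by (auto simp: grid_point_def vec_eq_iff axis_def algebra_simps)

lemma grid_point_add_oe: "grid_point b h k + h *\<^sub>R oe l = grid_point b h (k(of_nat l := k (of_nat l) + 1))"
  by (simp add: grid_point_update oe_def)

lemma grid_point_diff_oe: "grid_point b h k - h *\<^sub>R oe l = grid_point b h (k(of_nat l := k (of_nat l) - 1))"
  using grid_point_update[of b h k "of_nat l" "-1"] by (simp add: oe_def)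

lemma grid_point_zero: "(\<And>j. k j = 0) \<Longrightarrow> grid_point b h k = b"
  by (simp add: grid_point_def vec_eq_iff)

lemma grid_point_in_lattice: "b \<in> lattice h \<Longrightarrow> grid_point b h k \<in> lattice h"
  unfolding lattice_def grid_point_def
  by (auto simp: algebra_simps) (metis distrib_left of_int_add)

lemma norm_grid_point_diff_le:
  assumes "k \<in> cube m"
  shows "norm (grid_point b h k - b) \<le> \<bar>h\<bar> * (8 * real m)"
proof -
  have "norm (grid_point b h k - b) = \<bar>h\<bar> * norm (\<chi> j. (of_int (k j) :: real))"
    by (simp add: grid_point_def)
  also have "\<dots> \<le> \<bar>h\<bar> * (\<Sum>j\<in>UNIV. \<bar>of_int (k j) :: real\<bar>)"
    by (intro mult_left_mono) (auto intro: order_trans[OF norm_le_l1_cart])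
  also have "\<dots> \<le> \<bar>h\<bar> * (\<Sum>j\<in>(UNIV::8 set). real m)"
  proof (intro mult_left_mono sum_mono)
    show "\<bar>of_int (k j) :: real\<bar> \<le> real m" for j
      using assms unfolding mem_cube by (metis of_int_abs of_int_le_iff of_int_of_nat_eq)
  qed simp
  finally show ?thesis by simp
qed

lemma bilinear_omult: "bilinear omult"
  unfolding bilinear_def
proof (intro conjI allI linearI)
  fix x y z :: "real^8" and c :: real
  show "omult x (y + z) = omult x y + omult x z" "omult x (c *\<^sub>R y) = c *\<^sub>R omult x y"
    "omult (y + z) x = omult y x + omult z x" "omult (c *\<^sub>R y) x = c *\<^sub>R omult y x"
    by (simp_all add: omult_def algebra_simps sum.distrib scaleR_sum_right)
qed

lemma linear_omult: "linear (omult x)"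
  using bilinear_omult by (simp add: bilinear_def)

lemma norm_oe [simp]: "norm (oe l) = 1"
  by (simp add: oe_def)

definition octD_linear :: "(real^8 \<Rightarrow> real^8) \<Rightarrow> real^8" where
  "octD_linear L = (\<Sum>l<8. omult (oe l) (L (oe l)))"

lemma octD_eq_octD_linear: "(f has_derivative L) (at x) \<Longrightarrow> octD f x = octD_linear L"
  by (simp add: octD_def octD_linear_def frechet_derivative_at[symmetric])

lemma octDh_diff: "octDh h (\<lambda>y. F y - G y) x = octDh h F x - octDh h G x"
  unfolding octDh_def
  by (simp add: linear_diff[OF linear_omult] scaleR_diff_right sum_subtractf)

lemma sum_octDh:
  assumes "finite S"
  shows "(\<Sum>k\<in>S. octDh h g (Q k)) = (\<Sum>l<8. omult (oe l) ((1 / (2 * h)) *\<^sub>R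
      ((\<Sum>k\<in>S. g (Q k + h *\<^sub>R oe l)) - (\<Sum>k\<in>S. g (Q k - h *\<^sub>R oe l)))))"
  unfolding octDh_def
  by (subst sum.swap)
    (simp add: linear_sum[OF linear_omult] linear_diff[OF linear_omult] scaleR_diff_right
      scaleR_sum_right sum_subtractf)

lemma norm_sum_omult_oe_le:
  assumes K: "\<And>x y. norm (omult x y) \<le> K * norm x * norm y"
    and bound: "\<And>l. l < 8 \<Longrightarrow> norm (u l) \<le> c"
  shows "norm (\<Sum>l<8. omult (oe l) (u l)) \<le> 8 * K * c"
proof -
  have "0 \<le> K"
    using K[of "oe 0" "oe 0"] by (simp add: order_trans[OF norm_ge_zero])
  then have "norm (omult (oe l) (u l)) \<le> K * c" if "l < 8" for l
    using K[of "oe l" "u l"] bound[OF that] by (simp add: order_trans[OF _ mult_left_mono])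
  then have "norm (\<Sum>l<8. omult (oe l) (u l)) \<le> (\<Sum>l<(8::nat). K * c)"
    by (intro sum_norm_le) simp
  then show ?thesis by simp
qed

lemma norm_sum_octDh_grid_le:
  assumes K: "\<And>x y. norm (omult x y) \<le> K * norm x * norm y"
    and h: "h > 0"
    and bound: "\<And>k. k \<in> cube (Suc n) \<Longrightarrow> norm (g (grid_point b h k)) \<le> \<epsilon>"
  shows "norm (\<Sum>k\<in>cube n. octDh h g (grid_point b h k)) \<le> 16 * K * (2 * real n + 1) ^ 7 * \<epsilon> / h"
proof -
  have "norm ((1 / (2 * h)) *\<^sub>R ((\<Sum>k\<in>cube n. g (grid_point b h k + h *\<^sub>R oe l))
      - (\<Sum>k\<in>cube n. g (grid_point b h k - h *\<^sub>R oe l)))) \<le> 2 * (2 * real n + 1) ^ 7 * \<epsilon> / h" for l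
  proof -
    let ?D = "(\<Sum>k\<in>cube n. g (grid_point b h k + h *\<^sub>R oe l))
      - (\<Sum>k\<in>cube n. g (grid_point b h k - h *\<^sub>R oe l))"
    have "norm ?D \<le> 4 * (2 * real n + 1) ^ 7 * \<epsilon>"
      unfolding grid_point_add_oe grid_point_diff_oe
      using norm_sum_cube_shift_diff_le[of n "\<lambda>k. g (grid_point b h k)" \<epsilon> "of_nat l", OF bound]
      by simp
    then have "norm ?D / (2 * h) \<le> 4 * (2 * real n + 1) ^ 7 * \<epsilon> / (2 * h)"
      by (rule divide_right_mono) (use h in simp)
    then show ?thesis
      using h by (simp add: ac_simps)
  qed
  then have "norm (\<Sum>l<8. omult (oe l) ((1 / (2 * h)) *\<^sub>R ((\<Sum>k\<in>cube n. g (grid_point b h k + h *\<^sub>R oe l))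
      - (\<Sum>k\<in>cube n. g (grid_point b h k - h *\<^sub>R oe l))))) \<le> 8 * K * (2 * (2 * real n + 1) ^ 7 * \<epsilon> / h)"
    by (intro norm_sum_omult_oe_le[OF K])
  then show ?thesis
    by (simp add: sum_octDh)
qed

lemma norm_octDh_sub_octD_linear_le:
  fixes f' :: "real^8 \<Rightarrow> ((real^8) \<Rightarrow>\<^sub>L (real^8))"
  assumes K: "\<And>x y. norm (omult x y) \<le> K * norm x * norm y"
    and der: "\<And>y. y \<in> ball x0 r \<Longrightarrow> (f has_derivative f' y) (at y)"
    and close: "\<And>y. y \<in> ball x0 r \<Longrightarrow> norm (f' y - f' x0) \<le> \<eta>"
    and ball: "\<And>l. l < 8 \<Longrightarrow> x + h *\<^sub>R oe l \<in> ball x0 r \<and> x - h *\<^sub>R oe l \<in> ball x0 r"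
    and h: "h > 0"
  shows "norm (octDh h f x - octD_linear (f' x0)) \<le> 8 * K * \<eta>"
proof -
  have "octDh h f x - octD_linear (f' x0) = (\<Sum>l<8. omult (oe l)
      ((1 / (2 * h)) *\<^sub>R (f (x + h *\<^sub>R oe l) - f (x - h *\<^sub>R oe l)) - f' x0 (oe l)))"
    by (simp add: octDh_def octD_linear_def sum_subtractf linear_diff[OF linear_omult])
  also have "norm \<dots> \<le> 8 * K * \<eta>"
    using norm_central_difference_sub_le[OF der close _ _ h] ball
    by (intro norm_sum_omult_oe_le[OF K]) fastforce
  finally show ?thesis .
qed

lemma norm_octD_linear_le_grid:
  fixes f fh :: "real^8 \<Rightarrow> real^8" and f' :: "real^8 \<Rightarrow> ((real^8) \<Rightarrow>\<^sub>L (real^8))"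
  assumes K: "\<And>x y. norm (omult x y) \<le> K * norm x * norm y"
    and h: "h > 0"
    and der: "\<And>y. y \<in> ball x0 r \<Longrightarrow> (f has_derivative f' y) (at y)"
    and close: "\<And>y. y \<in> ball x0 r \<Longrightarrow> norm (f' y - f' x0) \<le> \<eta>"
    and in_ball: "\<And>k. k \<in> cube (Suc n) \<Longrightarrow> grid_point b h k \<in> ball x0 r"
    and discrete_zero: "\<And>k. k \<in> cube n \<Longrightarrow> octDh h fh (grid_point b h k) = 0"
    and approx: "\<And>k. k \<in> cube (Suc n) \<Longrightarrow> norm (f (grid_point b h k) - fh (grid_point b h k)) \<le> \<epsilon>"
  shows "norm (octD_linear (f' x0)) \<le> 8 * K * (\<eta> + 2 * \<epsilon> / ((2 * real n + 1) * h))"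
proof -
  define N where "N = real (2 * n + 1)"
  have card_N: "real (card (cube n :: (8 \<Rightarrow> int) set)) = N ^ 8"
    by (simp add: card_cube N_def)
  define v where "v = octD_linear (f' x0)"
  define S where "S = (\<Sum>k\<in>cube n. octDh h f (grid_point b h k))"
  have "S = (\<Sum>k\<in>cube n. octDh h (\<lambda>y. f y - fh y) (grid_point b h k))"
    unfolding S_def octDh_diff using discrete_zero by simp
  then have norm_S: "norm S \<le> 16 * K * N ^ 7 * \<epsilon> / h"
    unfolding N_def using norm_sum_octDh_grid_le[OF K h, of n "\<lambda>y. f y - fh y"] approx
    by (simp add: add.commute)
  have pointwise: "norm (octDh h f (grid_point b h k) - v) \<le> 8 * K * \<eta>" if "k \<in> cube n" for k
  proof (rule norm_octDh_sub_octD_linear_le[OF K der close _ h, folded v_def])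
    show "grid_point b h k + h *\<^sub>R oe l \<in> ball x0 r \<and> grid_point b h k - h *\<^sub>R oe l \<in> ball x0 r" for l
      unfolding grid_point_add_oe grid_point_diff_oe
      using in_ball cube_update[OF that, of 1] cube_update[OF that, of "-1"] by simp
  qed
  have "norm (\<Sum>k\<in>cube n. octDh h f (grid_point b h k) - v) \<le> (\<Sum>k::8 \<Rightarrow> int\<in>cube n. 8 * K * \<eta>)"
    using pointwise by (intro sum_norm_le) blast
  also have "\<dots> = N ^ 8 * (8 * K * \<eta>)"
    by (simp add: card_N)
  finally have "norm (\<Sum>k\<in>cube n. octDh h f (grid_point b h k) - v) \<le> N ^ 8 * (8 * K * \<eta>)" .
  moreover have "(\<Sum>k\<in>cube n. octDh h f (grid_point b h k) - v) = S - N ^ 8 *\<^sub>R v"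
    by (simp add: S_def sum_subtractf sum_constant_scaleR card_N del: sum_constant)
  ultimately have "N ^ 8 * norm v \<le> 16 * K * N ^ 7 * \<epsilon> / h + N ^ 8 * (8 * K * \<eta>)"
    using norm_S norm_triangle_sub[of "N ^ 8 *\<^sub>R v" S] by (simp add: norm_minus_commute N_def)
  also have "\<dots> = N ^ 8 * (8 * K * (\<eta> + 2 * \<epsilon> / (N * h)))"
  proof -
    have "N > 0"
      by (simp add: N_def)
    moreover have "N ^ 8 = N * N ^ 7"
      by (simp flip: power_Suc)
    then show ?thesis
      using h by (simp add: field_simps)
  qed
  finally show ?thesis
    unfolding v_def N_def by (simp add: mult_le_cancel_left_pos add.commute)
qed

section \<open>Lattice cubes inside discrete domains\<close>

lemma axis_eq_oe: "\<exists>l<8. axis (i::8) 1 = oe l"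
  unfolding oe_def
  apply (induct i rule: bit0_induct)
  subgoal for z by (intro exI[of _ "nat z"]) auto
  done

lemma nbhd_axis: "x + h *\<^sub>R axis i 1 \<in> nbhd h x" "x - h *\<^sub>R axis i 1 \<in> nbhd h x"
  using axis_eq_oe[of i] by (auto simp: nbhd_def)

lemma mem_of_nbhd_not_dbound:
  assumes "x \<in> A" "x \<in> lattice h" "x \<notin> dbound h A" "y \<in> nbhd h x" "y \<in> lattice h"
  shows "y \<in> A"
proof -
  have "x \<in> nbhd h x"
    by (simp add: nbhd_def)
  then show ?thesis
    using assms unfolding dbound_def by blast
qed

text \<open>Walk from \<open>b\<close> to \<open>grid_point b h k\<close> one lattice step at a time: a step can only leave
  \<open>A\<close> from a point of the discrete boundary.\<close>
lemma grid_point_mem_of_no_dbound: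
  assumes b: "b \<in> A" "b \<in> lattice h"
    and no_dbound: "\<And>k. k \<in> cube n \<Longrightarrow> grid_point b h k \<notin> dbound h A"
    and "k \<in> cube n"
  shows "grid_point b h k \<in> A"
  using \<open>k \<in> cube n\<close>
proof (induction "\<Sum>j\<in>UNIV. nat \<bar>k j\<bar>" arbitrary: k rule: less_induct)
  case less
  show ?case
  proof (cases "\<forall>j. k j = 0")
    case True
    then show ?thesis
      using b grid_point_zero by metis
  next
    case False
    then obtain i where "k i \<noteq> 0"
      by blast
    define s where "s = sgn (k i)"
    define k' where "k' = k(i := k i - s)"
    have s: "s = 1 \<or> s = -1" and smaller: "\<bar>k' i\<bar> < \<bar>k i\<bar>"
      using \<open>k i \<noteq> 0\<close> by (auto simp: s_def k'_def sgn_if)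
    have bound_k: "\<bar>k j\<bar> \<le> int n" for j
      using less.prems by (simp add: mem_cube)
    have "\<bar>k' j\<bar> \<le> int n" for j
      using bound_k[of i] bound_k[of j] smaller by (simp add: k'_def)
    then have "k' \<in> cube n"
      by (simp add: mem_cube)
    moreover have "(\<Sum>j\<in>UNIV. nat \<bar>k' j\<bar>) < (\<Sum>j\<in>UNIV. nat \<bar>k j\<bar>)"
    proof (rule sum_strict_mono_ex1)
      show "\<forall>j\<in>UNIV. nat \<bar>k' j\<bar> \<le> nat \<bar>k j\<bar>"
        using smaller by (simp add: k'_def)
      show "\<exists>j\<in>UNIV. nat \<bar>k' j\<bar> < nat \<bar>k j\<bar>"
        using smaller by (intro bexI[of _ i]) simp_all
    qed simp
    ultimately have "grid_point b h k' \<in> A"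
      using less.hyps by blast
    moreover have "grid_point b h k = grid_point b h k' + h *\<^sub>R axis i 1
        \<or> grid_point b h k = grid_point b h k' - h *\<^sub>R axis i 1"
      using s grid_point_update[of b h k' i s] by (auto simp: k'_def)
    then have "grid_point b h k \<in> nbhd h (grid_point b h k')"
      using nbhd_axis by metis
    moreover have "grid_point b h k' \<notin> dbound h A"
      using no_dbound \<open>k' \<in> cube n\<close> by blast
    ultimately show ?thesis
      using mem_of_nbhd_not_dbound grid_point_in_lattice b(2) by blast
  qed
qed

lemma eventually_grid_cube_in_dinterior:
  assumes "open B" "ball x0 r \<subseteq> B" "r > 0"
    and lattice: "\<forall>h>0. Bh h \<subseteq> lattice h"
    and conv: "disc_converges Bh B"
  shows "\<forall>\<^sub>F h in at_right 0. \<exists>b. \<forall>n. 8 * h * real n \<le> r / 4 \<longrightarrow>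
    (\<forall>k\<in>cube n. grid_point b h k \<in> ball x0 r \<inter> dinterior h (Bh h))"
proof -
  have "x0 \<in> closure B"
    using assms(2,3) closure_subset by fastforce
  have "r / 4 > 0"
    using \<open>r > 0\<close> by simp
  then have "\<forall>\<^sub>F h in at_right 0. \<forall>a\<in>closure B. \<exists>b\<in>Bh h. dist a b < r / 4"
    using conv unfolding disc_converges_def maxmin_to0_def by blast
  with \<open>x0 \<in> closure B\<close> have near_x0: "\<forall>\<^sub>F h in at_right 0. \<exists>b\<in>Bh h. dist x0 b < r / 4"
    by (auto elim: eventually_mono)
  have near_frontier: "\<forall>\<^sub>F h in at_right 0. \<forall>a\<in>dbound h (Bh h). \<exists>z\<in>frontier B. dist a z < r / 4"
    using conv \<open>r / 4 > 0\<close> unfolding disc_converges_def maxmin_to0_def by blast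
  show ?thesis
    using eventually_at_right_less near_x0 near_frontier
  proof eventually_elim
    case (elim h)
    then obtain b where b: "b \<in> Bh h" "dist x0 b < r / 4" and h: "h > 0"
      by auto
    have "grid_point b h k \<in> ball x0 r \<inter> dinterior h (Bh h)"
      if n: "8 * h * real n \<le> r / 4" and k: "k \<in> cube n" for n k
    proof -
      have near: "dist x0 (grid_point b h k') < r / 2" if "k' \<in> cube n" for k'
      proof -
        have "dist x0 (grid_point b h k') \<le> dist x0 b + norm (grid_point b h k' - b)"
          by (metis dist_norm dist_triangle dist_commute)
        also have "norm (grid_point b h k' - b) \<le> 8 * h * real n"
          using norm_grid_point_diff_le[OF that, of b h] h by simp
        finally show ?thesis
          using b(2) n by simp
      qed
      have no_dbound: "grid_point b h k' \<notin> dbound h (Bh h)" if "k' \<in> cube n" for k'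
      proof
        assume "grid_point b h k' \<in> dbound h (Bh h)"
        then obtain z where "z \<in> frontier B" "dist (grid_point b h k') z < r / 4"
          using elim by blast
        moreover have "dist x0 z < r"
          using near[OF that] \<open>dist (grid_point b h k') z < r / 4\<close> dist_triangle[of x0 z "grid_point b h k'"]
            \<open>r > 0\<close> by linarith
        ultimately show False
          using assms(1,2) frontier_disjoint_eq[of B] by auto
      qed
      have "grid_point b h k \<in> Bh h"
        using grid_point_mem_of_no_dbound[OF b(1) _ no_dbound k] lattice h b(1) by blast
      then show ?thesis
        using near[OF k] no_dbound[OF k] \<open>r > 0\<close> by (auto simp: dinterior_def dist_commute)
    qed
    then show ?case
      by blast
  qed
qed

section \<open>Vanishing of the Dirac operator\<close>

lemma norm_octD_linear_le_of_discrete_approx: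
  fixes f :: "real^8 \<Rightarrow> real^8" and fh :: "real \<Rightarrow> real^8 \<Rightarrow> real^8"
    and f' :: "real^8 \<Rightarrow> ((real^8) \<Rightarrow>\<^sub>L (real^8))"
  assumes K: "\<And>x y. norm (omult x y) \<le> K * norm x * norm y"
    and B: "open B" "ball x0 r \<subseteq> B" "r > 0"
    and lattice: "\<forall>h>0. Bh h \<subseteq> lattice h"
    and conv: "disc_converges Bh B"
    and der: "\<And>y. y \<in> ball x0 r \<Longrightarrow> (f has_derivative f' y) (at y)"
    and close: "\<And>y. y \<in> ball x0 r \<Longrightarrow> norm (f' y - f' x0) \<le> \<eta>"
    and discrete_zero: "\<forall>h>0. \<forall>x\<in>dinterior h (Bh h). octDh h (fh h) x = 0"
    and approx: "\<forall>\<epsilon>>0. \<forall>\<^sub>F h in at_right 0. \<forall>x\<in>Bh h \<inter> B. norm (f x - fh h x) < \<epsilon>"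
  shows "norm (octD_linear (f' x0)) \<le> 8 * K * \<eta>"
proof (rule le_of_forall_pos_le_add_mult)
  fix \<epsilon> :: real
  assume "\<epsilon> > 0"
  have ev_small: "\<forall>\<^sub>F h in at_right 0. 0 < h \<and> h < r / 64"
    using \<open>r > 0\<close> by (simp add: eventually_at_right_field) (auto intro!: exI[of _ "r / 64"])
  have ev_approx: "\<forall>\<^sub>F h in at_right 0. \<forall>x\<in>Bh h \<inter> B. norm (f x - fh h x) < \<epsilon>"
    using approx \<open>\<epsilon> > 0\<close> by blast
  obtain h b where h: "0 < h" "h < r / 64"
    and approx_h: "\<forall>x\<in>Bh h \<inter> B. norm (f x - fh h x) < \<epsilon>"
    and cube_ok: "\<And>n k. 8 * h * real n \<le> r / 4 \<Longrightarrow> k \<in> cube n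
      \<Longrightarrow> grid_point b h k \<in> ball x0 r \<inter> dinterior h (Bh h)"
    using eventually_happens'[OF trivial_limit_at_right_real
        eventually_conj[OF eventually_conj[OF ev_small ev_approx] eventually_grid_cube_in_dinterior[OF B lattice conv]]]
    by blast
  \<comment> \<open>a cube of side about \<open>r / 32\<close>: it fits into the ball, and \<open>(2n+1)h\<close> is bounded below by \<open>r / 64\<close>\<close>
  define n where "n = nat \<lfloor>r / (64 * h)\<rfloor>"
  have "real n = \<lfloor>r / (64 * h)\<rfloor>"
    using h(1) \<open>r > 0\<close> by (simp add: n_def)
  then have "real n \<le> r / (64 * h)" "r / (64 * h) < real n + 1"
    using floor_correct[of "r / (64 * h)"] by simp_all
  then have "h * real n \<le> r / 64" "r / 64 < h * (real n + 1)"
    using h(1) by (simp_all add: field_simps)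
  then have small: "8 * h * real (Suc n) \<le> r / 4" and large: "r / 64 \<le> (2 * real n + 1) * h"
    using h by (simp_all add: algebra_simps)
  have grid_ok: "grid_point b h k \<in> ball x0 r \<inter> dinterior h (Bh h)" if "k \<in> cube (Suc n)" for k
    using cube_ok[OF small that] .
  have "norm (octD_linear (f' x0)) \<le> 8 * K * (\<eta> + 2 * \<epsilon> / ((2 * real n + 1) * h))"
  proof (rule norm_octD_linear_le_grid[OF K h(1) der close])
    show "grid_point b h k \<in> ball x0 r" if "k \<in> cube (Suc n)" for k
      using grid_ok[OF that] by blast
    show "octDh h (fh h) (grid_point b h k) = 0" if "k \<in> cube n" for k
      using grid_ok cube_subset_Suc that discrete_zero h(1) by blast
    show "norm (f (grid_point b h k) - fh h (grid_point b h k)) \<le> \<epsilon>" if "k \<in> cube (Suc n)" for k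
    proof -
      have "grid_point b h k \<in> Bh h \<inter> B"
        using grid_ok[OF that] B(2) by (auto simp: dinterior_def)
      then show ?thesis
        using approx_h less_imp_le by blast
    qed
  qed
  also have "\<dots> \<le> 8 * K * (\<eta> + 128 * \<epsilon> / r)"
  proof -
    have "2 * \<epsilon> / ((2 * real n + 1) * h) \<le> 2 * \<epsilon> / (r / 64)"
      using large \<open>\<epsilon> > 0\<close> \<open>r > 0\<close> by (intro divide_left_mono) auto
    moreover have "0 \<le> K"
      using K[of "oe 0" "oe 0"] by (simp add: order_trans[OF norm_ge_zero])
    ultimately show ?thesis
      by (simp add: mult_left_mono)
  qed
  finally show "norm (octD_linear (f' x0)) \<le> 8 * K * \<eta> + (1024 * K / r) * \<epsilon>"
    by (simp add: algebra_simps)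
qed

theorem mainTheorem19:
  fixes B :: "(real^8) set"
    and Bh :: "real \<Rightarrow> (real^8) set"
    and f :: "real^8 \<Rightarrow> real^8"
    and fh :: "real \<Rightarrow> real^8 \<Rightarrow> real^8"
    and f' :: "real^8 \<Rightarrow> ((real^8) \<Rightarrow>\<^sub>L (real^8))"
  assumes "open B" and "connected B" and "bounded B" and "B \<noteq> {}"
    and "\<forall>h>0. Bh h \<subseteq> lattice h"
    and "disc_converges Bh B"
    and "\<forall>x\<in>B. (f has_derivative blinfun_apply (f' x)) (at x)"
    and "continuous_on B f'"
    and "\<forall>h>0. \<forall>x\<in>dinterior h (Bh h). octDh h (fh h) x = 0"
    and "\<forall>\<epsilon>>0. \<forall>\<^sub>F h in at_right 0. \<forall>x\<in>Bh h \<inter> B. norm (f x - fh h x) < \<epsilon>"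
  shows "\<forall>x\<in>B. octD f x = 0"
proof
  fix x0
  assume "x0 \<in> B"
  obtain K where K: "\<And>x y. norm (omult x y) \<le> K * norm x * norm y"
    using bilinear_bounded_pos[OF bilinear_omult] by blast
  have "norm (octD_linear (f' x0)) \<le> 8 * K * \<eta>" if \<eta>: "\<eta> > 0" for \<eta>
  proof -
    obtain r where r: "r > 0" "ball x0 r \<subseteq> B"
      and close: "\<And>y. y \<in> ball x0 r \<Longrightarrow> dist (f' y) (f' x0) < \<eta>"
      using continuous_on_obtain_ball[OF assms(8,1) \<open>x0 \<in> B\<close> \<eta>] by blast
    show ?thesis
    proof (rule norm_octD_linear_le_of_discrete_approx[OF K \<open>open B\<close> r(2,1) assms(5,6) _ _ assms(9,10)])
      show "(f has_derivative f' y) (at y)" if "y \<in> ball x0 r" for y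
        using that r(2) assms(7) by blast
      show "norm (f' y - f' x0) \<le> \<eta>" if "y \<in> ball x0 r" for y
        using close[OF that] by (simp add: dist_norm)
    qed
  qed
  then have "norm (octD_linear (f' x0)) \<le> 0"
    using le_of_forall_pos_le_add_mult[of "norm (octD_linear (f' x0))" 0 "8 * K"] by simp
  then have "octD_linear (f' x0) = 0"
    by simp
  then show "octD f x0 = 0"
    using octD_eq_octD_linear assms(7) \<open>x0 \<in> B\<close> by metis
qed

end
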